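(* Let $\Psi=\{S_j\mid j\in J\}$ be a family of formal power series $S_j:\Sigma^*\to\mathbb{R}^p$ indexed by a finite set $J$. (i) If $\Psi$ admits a stable representation, then $\Psi$ is square summable. (ii) If $\Psi$ is square summable, then every minimal representation of $\Psi$ is stable.
   Context: $\Sigma$ is a finite alphabet, $\Sigma^*$ the set of finite words over $\Sigma$ (including the empty word $\epsilon$). For matrices $A_\sigma$ ($\sigma\in\Sigma$) and $w=\sigma_1\cdots\sigma_k$, write $A_w=A_{\sigma_k}\cdots A_{\sigma_1}$, $A_\epsilon=I$. A representation of $\Psi$ is a tuple $R=(\mathbb{R}^n,\{A_\sigma\}_{\sigma\in\Sigma},B,C)$ with $A_\sigma\in\mathbb{R}^{n\times n}$, $C\in\mathbb{R}^{p\times n}$, $B=\{B_j\in\mathbb{R}^n\mid j\in J\}$, such that $S_j(w)=CA_wB_j$ for all $j\in J$, $w\in\Sigma^*$; its dimension is $n$. $\Psi$ is rational if it has a representation. A representation is minimal if no representation of $\Psi$ has smaller dimension. $R$ is stable if all eigenvalues of $\sum_{\sigma\in\Sigma}A_\sigma^T\otimes A_\sigma^T$ have modulus $<1$. $\Psi$ is square summable if $\sum_{w\in\Sigma^*}\|S_j(w)\|_2^2<\infty$ for every $j\in J$. *)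

theory Defs
  imports "HOL-Analysis.Analysis" "Jordan_Normal_Form.Char_Poly"
begin

definition kron :: "'b::times mat \<Rightarrow> 'b mat \<Rightarrow> 'b mat" where
  "kron X Y = mat (dim_row X * dim_row Y) (dim_col X * dim_col Y)
     (\<lambda>(r, c). X $$ (r div dim_row Y, c div dim_col Y) * Y $$ (r mod dim_row Y, c mod dim_col Y))"

text \<open>Word matrix: for w = s1 ... sk, A_w = A_sk * ... * A_s1, A_epsilon = I.\<close>
fun word_mat :: "nat \<Rightarrow> ('a \<Rightarrow> real mat) \<Rightarrow> 'a list \<Rightarrow> real mat" where
  "word_mat n A [] = 1\<^sub>m n"
| "word_mat n A (s # w) = word_mat n A w * A s"

definition is_representation ::
  "'j set \<Rightarrow> nat \<Rightarrow> ('j \<Rightarrow> 'a list \<Rightarrow> real vec) \<Rightarrow>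
   nat \<Rightarrow> ('a \<Rightarrow> real mat) \<Rightarrow> ('j \<Rightarrow> real vec) \<Rightarrow> real mat \<Rightarrow> bool" where
  "is_representation J p S n A B C \<longleftrightarrow>
     (\<forall>s. A s \<in> carrier_mat n n) \<and>
     (\<forall>j\<in>J. B j \<in> carrier_vec n) \<and>
     C \<in> carrier_mat p n \<and>
     (\<forall>j\<in>J. \<forall>w. S j w = mult_mat_vec C (mult_mat_vec (word_mat n A w) (B j)))"

definition rational_family ::
  "'j set \<Rightarrow> nat \<Rightarrow> ('j \<Rightarrow> 'a list \<Rightarrow> real vec) \<Rightarrow> bool" where
  "rational_family J p S \<longleftrightarrow> (\<exists>n A B C. is_representation J p S n A B C)"

definition minimal_representation ::
  "'j set \<Rightarrow> nat \<Rightarrow> ('j \<Rightarrow> 'a list \<Rightarrow> real vec) \<Rightarrow>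
   nat \<Rightarrow> ('a \<Rightarrow> real mat) \<Rightarrow> ('j \<Rightarrow> real vec) \<Rightarrow> real mat \<Rightarrow> bool" where
  "minimal_representation J p S n A B C \<longleftrightarrow>
     is_representation J p S n A B C \<and>
     (\<forall>n' A' B' C'. is_representation J p S n' A' B' C' \<longrightarrow> n \<le> n')"

definition stab_mat :: "nat \<Rightarrow> ('a::finite \<Rightarrow> real mat) \<Rightarrow> real mat" where
  "stab_mat n A = mat (n * n) (n * n)
     (\<lambda>rc. \<Sum>s\<in>UNIV. kron (transpose_mat (A s)) (transpose_mat (A s)) $$ rc)"

definition stable_rep :: "nat \<Rightarrow> ('a::finite \<Rightarrow> real mat) \<Rightarrow> bool" where
  "stable_rep n A \<longleftrightarrow>
     (\<forall>k::complex. eigenvalue (map_mat complex_of_real (stab_mat n A)) k \<longrightarrow> cmod k < 1)"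

definition sq_norm2 :: "real vec \<Rightarrow> real" where
  "sq_norm2 v = (\<Sum>i<dim_vec v. (v $ i)\<^sup>2)"

definition square_summable :: "'j set \<Rightarrow> ('j \<Rightarrow> 'a list \<Rightarrow> real vec) \<Rightarrow> bool" where
  "square_summable J S \<longleftrightarrow> (\<forall>j\<in>J. (\<lambda>w. sq_norm2 (S j w)) summable_on UNIV)"

end

theory Submission
  imports Defs "Jordan_Normal_Form.Spectral_Radius" "Jordan_Normal_Form.VS_Connect"
begin

unbundle no vec_syntax and no inner_syntax

text \<open>
  Let M be the stability matrix, the sum over the letters s of the Kronecker squares of the
  transposes of A s. Its k-th power has the entry at (a * n + b, c * n + d) equal to the sum, over
  all words w of length k, of (A w)(c, a) * (A w)(d, b). Hence the sums over words of length k of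
  the squared Frobenius norms of A w are dominated by entries of M^k, and dominate them. Geometric
  decay of M^k (spectral radius below 1) therefore makes w \<mapsto> |A w|^2 summable, and
  conversely summability forces M^k \<rightarrow> 0, which excludes eigenvalues of modulus at least 1.
  Part (i) follows from |C (A w) (B j)|^2 \<le> |C|^2 |B j|^2 |A w|^2 (Frobenius norms).

  For part (ii), minimality forces both the reachable vectors (A u) (B j) and the rows of C (A v)
  to span the state space: otherwise restricting to an invariant subspace, or dually to a quotient,
  gives a representation of smaller dimension. For such vectors x and y, the value x \<bullet> (A w) y is
  a component of S j (u w v), so it is square summable in w; by bilinearity so is every entry
  of A w, and the equivalence of the first paragraph yields stability.
\<close>

section \<open>Words over a finite alphabet\<close>

lemma finite_words_length: "finite {w :: 'a::finite list. length w = k}"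
  using finite_lists_length_eq[of "UNIV :: 'a set" k] by simp

lemma finite_words_shorter: "finite {w :: 'a::finite list. length w < k}"
  using finite_lists_length_le[of "UNIV :: 'a set" k] by (rule finite_subset[rotated]) auto

lemma sum_words_shorter:
  "sum f {w :: 'a::finite list. length w < K} = (\<Sum>k<K. sum f {w. length w = k})"
proof (induction K)
  case (Suc K)
  have "{w :: 'a list. length w < Suc K} = {w. length w < K} \<union> {w. length w = K}" by auto
  with Suc show ?case
    by (simp add: sum.union_disjoint finite_words_shorter finite_words_length disjoint_iff)
qed simp

lemma sum_words_length_Suc:
  "sum f {w :: 'a::finite list. length w = Suc k} = (\<Sum>w | length w = k. \<Sum>s\<in>UNIV. f (w @ [s]))"
proof -
  have "{w :: 'a list. length w = Suc k} = (\<lambda>(w, s). w @ [s]) ` ({w. length w = k} \<times> UNIV)"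
  proof (intro equalityI subsetI)
    fix x :: "'a list" assume "x \<in> {w. length w = Suc k}"
    then have "x = butlast x @ [last x]" "length (butlast x) = k"
      by (auto intro: append_butlast_last_id[symmetric])
    then show "x \<in> (\<lambda>(w, s). w @ [s]) ` ({w. length w = k} \<times> UNIV)" by force
  qed auto
  moreover have "inj_on (\<lambda>(w, s). w @ [s :: 'a]) ({w. length w = k} \<times> UNIV)"
    by (auto simp: inj_on_def)
  ultimately show ?thesis
    by (simp add: sum.reindex sum.cartesian_product split_def)
qed

lemma nonneg_summable_on_words_iff:
  fixes f :: "'a::finite list \<Rightarrow> real"
  assumes nonneg: "\<And>w. 0 \<le> f w"
  shows "f summable_on UNIV \<longleftrightarrow> summable (\<lambda>k. sum f {w. length w = k})"
proof
  assume "f summable_on UNIV"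
  show "summable (\<lambda>k. sum f {w. length w = k})"
  proof (rule summableI_nonneg_bounded)
    show "0 \<le> sum f {w. length w = k}" for k by (simp add: nonneg sum_nonneg)
    show "(\<Sum>k<K. sum f {w. length w = k}) \<le> infsum f UNIV" for K
      unfolding sum_words_shorter[symmetric] using \<open>f summable_on UNIV\<close>
      by (intro finite_sum_le_infsum) (auto simp: finite_words_shorter nonneg)
  qed
next
  assume summable: "summable (\<lambda>k. sum f {w. length w = k})"
  show "f summable_on UNIV"
  proof (rule nonneg_bdd_above_summable_on)
    show "bdd_above (sum f ` {F. F \<subseteq> UNIV \<and> finite F})"
    proof (rule bdd_aboveI2)
      fix F :: "'a list set" assume "F \<in> {F. F \<subseteq> UNIV \<and> finite F}"
      then obtain N where "length ` F \<subseteq> {..<N}" using finite_nat_bounded by blast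
      then have "sum f F \<le> sum f {w. length w < N}"
        by (intro sum_mono2) (auto simp: finite_words_shorter nonneg)
      also have "\<dots> = (\<Sum>k<N. sum f {w. length w = k})" by (rule sum_words_shorter)
      also have "\<dots> \<le> (\<Sum>k. sum f {w. length w = k})"
        using summable by (intro sum_le_suminf) (auto simp: nonneg sum_nonneg)
      finally show "sum f F \<le> (\<Sum>k. sum f {w. length w = k})" .
    qed
  qed (rule nonneg)
qed

lemma summable_on_infix:
  fixes f :: "'a list \<Rightarrow> 'b::banach"
  assumes "f summable_on UNIV"
  shows "(\<lambda>w. f (u @ w @ v)) summable_on UNIV"
proof -
  have "f summable_on range (\<lambda>w. u @ w @ v)"
    using assms by (rule summable_on_subset_banach) simp
  then show ?thesis by (subst (asm) summable_on_reindex) (auto simp: inj_def o_def)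
qed

lemma summable_on_sum:
  fixes f :: "'i \<Rightarrow> 'b \<Rightarrow> 'c::topological_comm_monoid_add"
  assumes "finite F" "\<And>i. i \<in> F \<Longrightarrow> f i summable_on A"
  shows "(\<lambda>x. \<Sum>i\<in>F. f i x) summable_on A"
  using assms by (induction F rule: finite_induct) (auto intro: summable_on_add)

definition sq_summable :: "('b \<Rightarrow> real) \<Rightarrow> bool" where
  "sq_summable f \<longleftrightarrow> (\<lambda>x. (f x)\<^sup>2) summable_on UNIV"

lemma sq_summable_add_scaled:
  assumes "sq_summable f" "sq_summable g"
  shows "sq_summable (\<lambda>x. c * f x + g x)"
  unfolding sq_summable_def
proof (rule summable_on_comparison_test)
  show "(\<lambda>x. 2 * c\<^sup>2 * (f x)\<^sup>2 + 2 * (g x)\<^sup>2) summable_on UNIV"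
    using assms unfolding sq_summable_def by (intro summable_on_add summable_on_cmult_right)
  show "(c * f x + g x)\<^sup>2 \<le> 2 * c\<^sup>2 * (f x)\<^sup>2 + 2 * (g x)\<^sup>2" for x
    using zero_le_power2[of "c * f x - g x"] by (simp add: power2_eq_square algebra_simps)
qed simp

lemma sq_summable_sum:
  assumes "finite F" "\<And>v. v \<in> F \<Longrightarrow> sq_summable (g v)"
  shows "sq_summable (\<lambda>x. \<Sum>v\<in>F. a v * g v x)"
  using assms
proof (induction F rule: finite_induct)
  case empty
  then show ?case by (simp add: sq_summable_def)
next
  case (insert v F)
  then show ?case by (simp add: sq_summable_add_scaled)
qed

section \<open>Frobenius norm, word matrices and the stability matrix\<close>

definition sq_frobenius :: "real mat \<Rightarrow> real" where
  "sq_frobenius M = (\<Sum>i<dim_row M. \<Sum>k<dim_col M. (M $$ (i, k))\<^sup>2)"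

lemma sq_frobenius_nonneg: "0 \<le> sq_frobenius M"
  unfolding sq_frobenius_def by (intro sum_nonneg) simp

lemma sq_entry_le_sq_frobenius:
  assumes "i < dim_row M" "k < dim_col M"
  shows "(M $$ (i, k))\<^sup>2 \<le> sq_frobenius M"
proof -
  have "(M $$ (i, k))\<^sup>2 \<le> (\<Sum>k'<dim_col M. (M $$ (i, k'))\<^sup>2)"
    using assms by (intro member_le_sum) auto
  also have "\<dots> \<le> sq_frobenius M"
    unfolding sq_frobenius_def using assms
    by (intro member_le_sum[of i _ "\<lambda>i. \<Sum>k<dim_col M. (M $$ (i, k))\<^sup>2"]) (auto intro: sum_nonneg)
  finally show ?thesis .
qed

lemma sq_component_le_sq_norm2: "i < dim_vec v \<Longrightarrow> (v $ i)\<^sup>2 \<le> sq_norm2 v"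
  unfolding sq_norm2_def by (intro member_le_sum) auto

lemma sq_norm2_mult_mat_vec_le:
  assumes M: "M \<in> carrier_mat nr nc" and v: "v \<in> carrier_vec nc"
  shows "sq_norm2 (M *\<^sub>v v) \<le> sq_frobenius M * sq_norm2 v"
proof -
  have "sq_norm2 (M *\<^sub>v v) = (\<Sum>i<nr. (\<Sum>k<nc. M $$ (i, k) * v $ k)\<^sup>2)"
    using M v by (simp add: sq_norm2_def scalar_prod_def atLeast0LessThan)
  also have "\<dots> \<le> (\<Sum>i<nr. (\<Sum>k<nc. (M $$ (i, k))\<^sup>2) * (\<Sum>k<nc. (v $ k)\<^sup>2))"
    by (intro sum_mono Cauchy_Schwarz_ineq_sum)
  also have "\<dots> = sq_frobenius M * sq_norm2 v"
    using M v by (simp add: sq_frobenius_def sq_norm2_def sum_distrib_right)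
  finally show ?thesis .
qed

lemma word_mat_carrier: "(\<And>s. A s \<in> carrier_mat n n) \<Longrightarrow> word_mat n A w \<in> carrier_mat n n"
  by (induction w) auto

lemma word_mat_append:
  assumes A: "\<And>s. A s \<in> carrier_mat n n"
  shows "word_mat n A (u @ v) = word_mat n A v * word_mat n A u"
proof (induction u)
  case Nil
  show ?case using right_mult_one_mat[OF word_mat_carrier[of A n v, OF A]] by simp
next
  case (Cons s u)
  then show ?case
    using word_mat_carrier[of A n, OF A] A by (simp add: assoc_mult_mat[of _ n n _ n _ n])
qed

lemma word_mat_snoc:
  assumes A: "\<And>s. A s \<in> carrier_mat n n"
  shows "word_mat n A (w @ [s]) = A s * word_mat n A w"
  using word_mat_append[of A n w "[s]", OF A] A[of s] by simp

lemma pair_index_less: "a < n \<Longrightarrow> b < n \<Longrightarrow> a * n + b < n * (n::nat)"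
proof -
  assume "a < n" "b < n"
  then have "(a + 1) * n \<le> n * n" by (intro mult_right_mono) auto
  with \<open>b < n\<close> show ?thesis by (simp add: algebra_simps)
qed

lemma pair_index_eq_iff: "b < n \<Longrightarrow> d < n \<Longrightarrow> a * n + b = c * n + d \<longleftrightarrow> a = c \<and> (b::nat) = d"
proof
  assume "b < n" "d < n" "a * n + b = c * n + d"
  then have "(a * n + b) div n = (c * n + d) div n" "(a * n + b) mod n = (c * n + d) mod n"
    by simp_all
  with \<open>b < n\<close> \<open>d < n\<close> show "a = c \<and> b = d" by simp
qed simp

lemma sum_pair_index: "(\<Sum>t<n * n. f t) = (\<Sum>t1<n. \<Sum>t2<n. f (t1 * n + (t2::nat)))"
proof -
  have "(\<Sum>t<m. f (k + t)) = sum f {k..<k + m}" for k m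
    by (induction m) auto
  then show ?thesis by (simp add: sum.nat_group[symmetric])
qed

lemma stab_mat_carrier: "stab_mat n A \<in> carrier_mat (n * n) (n * n)"
  unfolding stab_mat_def by simp

lemma stab_mat_entry:
  assumes A: "\<And>s. A s \<in> carrier_mat n n" and "a < n" "b < n" "c < n" "d < n"
  shows "stab_mat n A $$ (a * n + b, c * n + d) = (\<Sum>s\<in>UNIV. A s $$ (c, a) * A s $$ (d, b))"
proof -
  have "kron (transpose_mat (A s)) (transpose_mat (A s)) $$ (a * n + b, c * n + d)
      = A s $$ (c, a) * A s $$ (d, b)" for s
    using assms carrier_matD[OF A[of s]] pair_index_less[of a n b] pair_index_less[of c n d]
      by (simp add: kron_def)
  then show ?thesis
    using pair_index_less[of a n b] pair_index_less[of c n d] assms by (simp add: stab_mat_def)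
qed

lemma stab_mat_pow_entry:
  fixes A :: "'a::finite \<Rightarrow> real mat"
  assumes A: "\<And>s. A s \<in> carrier_mat n n" and ab: "a < n" "b < n"
  shows "c < n \<Longrightarrow> d < n \<Longrightarrow> (stab_mat n A ^\<^sub>m k) $$ (a * n + b, c * n + d)
     = (\<Sum>w | length w = k. word_mat n A w $$ (c, a) * word_mat n A w $$ (d, b))"
proof (induction k arbitrary: c d)
  case 0
  have "{w :: 'a list. length w = 0} = {[]}" by auto
  with 0 ab show ?case
    using stab_mat_carrier[of n A] pair_index_less[of a n b] pair_index_less[of c n d]
    by (auto simp: pair_index_eq_iff)
next
  case (Suc k)
  let ?M = "stab_mat n A" and ?W = "word_mat n A"
  have "(?M ^\<^sub>m Suc k) $$ (a * n + b, c * n + d)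
      = (\<Sum>t1<n. \<Sum>t2<n. (?M ^\<^sub>m k) $$ (a * n + b, t1 * n + t2) * ?M $$ (t1 * n + t2, c * n + d))"
    using stab_mat_carrier[of n A] pair_index_less[of a n b] pair_index_less[of c n d] ab Suc.prems
    by (simp add: scalar_prod_def atLeast0LessThan sum_pair_index)
  also have "\<dots> = (\<Sum>t1<n. \<Sum>t2<n. (\<Sum>w | length w = k. ?W w $$ (t1, a) * ?W w $$ (t2, b))
      * (\<Sum>s\<in>UNIV. A s $$ (c, t1) * A s $$ (d, t2)))"
    using Suc by (simp add: stab_mat_entry[OF A])
  also have "\<dots> = (\<Sum>w | length w = k. \<Sum>s\<in>UNIV.
      (\<Sum>t1<n. A s $$ (c, t1) * ?W w $$ (t1, a)) * (\<Sum>t2<n. A s $$ (d, t2) * ?W w $$ (t2, b)))"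
    by (simp add: sum_product sum.swap[of _ "{w. length w = k}" "{..<n}"]
        sum.swap[of _ UNIV "{..<n}"] mult_ac)
      (rule sum.swap)
  also have "\<dots> = (\<Sum>w | length w = k. \<Sum>s\<in>UNIV. ?W (w @ [s]) $$ (c, a) * ?W (w @ [s]) $$ (d, b))"
  proof -
    have "(A s * ?W w) $$ (i, j) = (\<Sum>t<n. A s $$ (i, t) * ?W w $$ (t, j))"
      if "i < n" "j < n" for s w i j
      using that carrier_matD[OF A[of s]] carrier_matD[OF word_mat_carrier[of A n w, OF A]]
      by (simp add: scalar_prod_def atLeast0LessThan)
    then show ?thesis using Suc.prems ab by (simp add: word_mat_snoc[OF A])
  qed
  also have "\<dots> = (\<Sum>w | length w = Suc k. ?W w $$ (c, a) * ?W w $$ (d, b))"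
    by (rule sum_words_length_Suc[symmetric])
  finally show ?case .
qed

lemma sum_sq_frobenius_word_mat:
  fixes A :: "'a::finite \<Rightarrow> real mat"
  assumes A: "\<And>s. A s \<in> carrier_mat n n"
  shows "(\<Sum>w | length w = k. sq_frobenius (word_mat n A w))
    = (\<Sum>i<n. \<Sum>j<n. (stab_mat n A ^\<^sub>m k) $$ (j * n + j, i * n + i))"
proof -
  have "(\<Sum>w | length w = k. sq_frobenius (word_mat n A w))
      = (\<Sum>w | length w = k. \<Sum>i<n. \<Sum>j<n. (word_mat n A w $$ (i, j))\<^sup>2)"
    using carrier_matD[OF word_mat_carrier[of A n, OF A]] by (simp add: sq_frobenius_def)
  also have "\<dots> = (\<Sum>i<n. \<Sum>j<n. \<Sum>w | length w = k. (word_mat n A w $$ (i, j))\<^sup>2)"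
    by (simp add: sum.swap[of _ "{..<n}" "{w. length w = k}"])
  also have "\<dots> = (\<Sum>i<n. \<Sum>j<n. (stab_mat n A ^\<^sub>m k) $$ (j * n + j, i * n + i))"
    by (simp add: stab_mat_pow_entry[OF A] power2_eq_square)
  finally show ?thesis .
qed

lemma abs_stab_mat_pow_entry_le:
  fixes A :: "'a::finite \<Rightarrow> real mat"
  assumes A: "\<And>s. A s \<in> carrier_mat n n" and r: "r < n * n" and c: "c < n * n"
  shows "\<bar>(stab_mat n A ^\<^sub>m k) $$ (r, c)\<bar> \<le> (\<Sum>w | length w = k. sq_frobenius (word_mat n A w))"
proof -
  have "n > 0" using r by (cases n) auto
  define a b c' d where "a = r div n" "b = r mod n" "c' = c div n" "d = c mod n"
  have idx: "a < n" "b < n" "c' < n" "d < n" "r = a * n + b" "c = c' * n + d"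
    using r c \<open>n > 0\<close> unfolding a_b_c'_d_def by (auto simp: less_mult_imp_div_less)
  let ?W = "word_mat n A"
  have "\<bar>(stab_mat n A ^\<^sub>m k) $$ (r, c)\<bar> = \<bar>\<Sum>w | length w = k. ?W w $$ (c', a) * ?W w $$ (d, b)\<bar>"
    using idx by (simp add: stab_mat_pow_entry[OF A])
  also have "\<dots> \<le> (\<Sum>w | length w = k. \<bar>?W w $$ (c', a)\<bar> * \<bar>?W w $$ (d, b)\<bar>)"
    by (rule order.trans[OF sum_abs]) (simp add: abs_mult)
  also have "\<dots> \<le> (\<Sum>w | length w = k. sq_frobenius (?W w))"
  proof (rule sum_mono)
    fix w
    have dims: "dim_row (?W w) = n" "dim_col (?W w) = n"
      using word_mat_carrier[of A n, OF A] by auto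
    have "2 * \<bar>?W w $$ (c', a)\<bar> * \<bar>?W w $$ (d, b)\<bar> \<le> (?W w $$ (c', a))\<^sup>2 + (?W w $$ (d, b))\<^sup>2"
      using sum_squares_bound[of "\<bar>?W w $$ (c', a)\<bar>" "\<bar>?W w $$ (d, b)\<bar>"] by simp
    moreover have "(?W w $$ (c', a))\<^sup>2 \<le> sq_frobenius (?W w)"
      and "(?W w $$ (d, b))\<^sup>2 \<le> sq_frobenius (?W w)"
      using idx dims by (auto intro: sq_entry_le_sq_frobenius)
    ultimately show "\<bar>?W w $$ (c', a)\<bar> * \<bar>?W w $$ (d, b)\<bar> \<le> sq_frobenius (?W w)" by linarith
  qed
  finally show ?thesis .
qed

section \<open>Spectral radius and decay of matrix powers\<close>

lemma smult_pow_mat: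
  assumes A: "(A :: 'b :: comm_ring_1 mat) \<in> carrier_mat n n"
  shows "(a \<cdot>\<^sub>m A) ^\<^sub>m k = a ^ k \<cdot>\<^sub>m (A ^\<^sub>m k)"
proof (induction k)
  case 0
  then show ?case using A by (auto intro!: eq_matI)
next
  case (Suc k)
  have Ak: "A ^\<^sub>m k \<in> carrier_mat n n" using A by simp
  have "(a \<cdot>\<^sub>m A) ^\<^sub>m Suc k = (a ^ k \<cdot>\<^sub>m (A ^\<^sub>m k)) * (a \<cdot>\<^sub>m A)" using Suc by simp
  also have "\<dots> = a ^ k \<cdot>\<^sub>m (A ^\<^sub>m k * (a \<cdot>\<^sub>m A))"
    using mult_smult_assoc_mat[of "A ^\<^sub>m k" n n "a \<cdot>\<^sub>m A" n "a ^ k"] Ak A by simp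
  also have "\<dots> = a ^ k \<cdot>\<^sub>m (a \<cdot>\<^sub>m (A ^\<^sub>m k * A))"
    using mult_smult_distrib[OF Ak A] by simp
  also have "\<dots> = a ^ Suc k \<cdot>\<^sub>m (A ^\<^sub>m Suc k)" by (rule eq_matI) (auto simp: mult.assoc)
  finally show ?case .
qed

lemma eigenvalue_smult_mat:
  assumes A: "(A :: 'b :: comm_ring_1 mat) \<in> carrier_mat n n" and "eigenvalue A \<mu>"
  shows "eigenvalue (a \<cdot>\<^sub>m A) (a * \<mu>)"
proof -
  obtain v where v: "eigenvector A v \<mu>" using assms(2) unfolding eigenvalue_def by blast
  then have "v \<in> carrier_vec n" "v \<noteq> 0\<^sub>v n" "A *\<^sub>v v = \<mu> \<cdot>\<^sub>v v"
    using A unfolding eigenvector_def by auto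
  moreover have "(a \<cdot>\<^sub>m A) *\<^sub>v v = a \<cdot>\<^sub>v (A *\<^sub>v v)"
    using A \<open>v \<in> carrier_vec n\<close>
    by (intro eq_vecI) (auto simp: scalar_prod_def sum_distrib_left mult.assoc)
  ultimately show ?thesis
    using A unfolding eigenvalue_def eigenvector_def by (auto simp: smult_smult_assoc)
qed

lemma pow_entries_geometric_bound:
  fixes M :: "complex mat"
  assumes M: "M \<in> carrier_mat N N" and eigenvalues: "\<And>\<mu>. eigenvalue M \<mu> \<Longrightarrow> cmod \<mu> < 1"
  shows "\<exists>K \<rho>. 0 \<le> \<rho> \<and> \<rho> < 1 \<and>
    (\<forall>k i j. i < N \<longrightarrow> j < N \<longrightarrow> cmod ((M ^\<^sub>m k) $$ (i, j)) \<le> K * \<rho> ^ k)"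
proof (cases "N = 0")
  case True
  then show ?thesis by (intro exI[of _ 0]) auto
next
  case False
  then have N: "N > 0" by simp
  obtain \<mu> where "eigenvalue M \<mu>" "spectral_radius M = cmod \<mu>"
    using spectral_radius_mem_max(1)[OF M N] unfolding spectrum_def by auto
  with eigenvalues have sr: "0 \<le> spectral_radius M" "spectral_radius M < 1" by auto
  define \<rho> where "\<rho> = (spectral_radius M + 1) / 2"
  have \<rho>: "0 < \<rho>" "\<rho> < 1" "spectral_radius M < \<rho>" using sr unfolding \<rho>_def by auto
  \<comment> \<open>Rescaling by \<rho> reduces to a matrix of spectral radius below 1, whose powers are bounded.\<close>
  define Mp where "Mp = complex_of_real (1 / \<rho>) \<cdot>\<^sub>m M"
  have Mp: "Mp \<in> carrier_mat N N" using M unfolding Mp_def by simp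
  have M_Mp: "M = complex_of_real \<rho> \<cdot>\<^sub>m Mp"
    using M \<rho> unfolding Mp_def by (intro eq_matI) auto
  have "spectral_radius Mp < 1"
  proof -
    obtain \<nu> where \<nu>: "eigenvalue Mp \<nu>" "spectral_radius Mp = cmod \<nu>"
      using spectral_radius_mem_max(1)[OF Mp N] unfolding spectrum_def by auto
    have "eigenvalue M (complex_of_real \<rho> * \<nu>)"
      unfolding M_Mp by (rule eigenvalue_smult_mat[OF Mp \<nu>(1)])
    then have "cmod (complex_of_real \<rho> * \<nu>) \<le> spectral_radius M"
      using spectral_radius_mem_max(2)[OF M N] unfolding spectrum_def by blast
    then have "\<rho> * cmod \<nu> \<le> spectral_radius M" using \<rho> by (simp add: norm_mult)
    with \<rho> have "\<rho> * cmod \<nu> < \<rho> * 1" by linarith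
    with \<rho> \<nu>(2) show ?thesis by (simp only: mult_less_cancel_left_pos)
  qed
  then obtain K where K: "\<And>k. norm_bound (Mp ^\<^sub>m k) K"
    using spectral_radius_jnf_norm_bound_less_1_upper_triangular[OF Mp] by blast
  show ?thesis
  proof (intro exI conjI allI impI)
    fix k i j assume ij: "i < N" "j < N"
    have "(M ^\<^sub>m k) $$ (i, j) = complex_of_real (\<rho> ^ k) * (Mp ^\<^sub>m k) $$ (i, j)"
      unfolding M_Mp smult_pow_mat[OF Mp] using Mp ij by simp
    moreover have "cmod ((Mp ^\<^sub>m k) $$ (i, j)) \<le> K"
      using K[of k] Mp ij unfolding norm_bound_def by auto
    moreover have "cmod (complex_of_real \<rho> ^ k) = \<rho> ^ k" using \<rho> by (simp add: norm_power)
    ultimately show "cmod ((M ^\<^sub>m k) $$ (i, j)) \<le> K * \<rho> ^ k"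
      using \<rho> by (simp add: norm_mult mult.commute mult_left_mono)
  qed (use \<rho> in auto)
qed

lemma eigenvalue_lt_1_if_pow_entries_tendsto_0:
  fixes M :: "complex mat"
  assumes M: "M \<in> carrier_mat N N"
    and lim: "\<And>i j. i < N \<Longrightarrow> j < N \<Longrightarrow> (\<lambda>k. (M ^\<^sub>m k) $$ (i, j)) \<longlonglongrightarrow> 0"
    and "eigenvalue M \<mu>"
  shows "cmod \<mu> < 1"
proof -
  obtain v where v: "eigenvector M v \<mu>" using assms(3) unfolding eigenvalue_def by blast
  then have "v \<in> carrier_vec N" "v \<noteq> 0\<^sub>v N" using M unfolding eigenvector_def by auto
  then obtain i where i: "i < N" "v $ i \<noteq> 0" by (metis eq_vecI carrier_vecD index_zero_vec)
  have "(\<lambda>k. \<Sum>j<N. (M ^\<^sub>m k) $$ (i, j) * v $ j) \<longlonglongrightarrow> (\<Sum>j<N. 0)"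
    using lim[OF i(1)] by (intro tendsto_sum tendsto_mult_left_zero) auto
  moreover have "(\<Sum>j<N. (M ^\<^sub>m k) $$ (i, j) * v $ j) = \<mu> ^ k * v $ i" for k
  proof -
    have "(M ^\<^sub>m k *\<^sub>v v) $ i = (\<Sum>j<N. (M ^\<^sub>m k) $$ (i, j) * v $ j)"
      using M \<open>v \<in> carrier_vec N\<close> i by (simp add: scalar_prod_def atLeast0LessThan)
    moreover have "(M ^\<^sub>m k *\<^sub>v v) $ i = \<mu> ^ k * v $ i"
      using eigenvector_pow[OF M v] \<open>v \<in> carrier_vec N\<close> i by simp
    ultimately show ?thesis by simp
  qed
  ultimately have "(\<lambda>k. \<mu> ^ k * v $ i) \<longlonglongrightarrow> 0" by simp
  then have "(\<lambda>k. \<mu> ^ k * v $ i * inverse (v $ i)) \<longlonglongrightarrow> 0" by (rule tendsto_mult_left_zero)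
  with i have "(\<lambda>k. norm (\<mu> ^ k)) \<longlonglongrightarrow> 0" by (simp add: tendsto_norm_zero)
  then have "\<forall>\<^sub>F k in sequentially. norm (\<mu> ^ k) < 1" by (rule order_tendstoD(2)) simp
  then obtain k where "norm (\<mu> ^ k) < 1" by (meson eventually_sequentially order_refl)
  then show ?thesis by (metis norm_power one_le_power not_le)
qed

section \<open>Stability is square summability of word matrices\<close>

lemma of_real_stab_mat_pow_entry:
  assumes "i < n * n" "j < n * n"
  shows "(map_mat complex_of_real (stab_mat n A) ^\<^sub>m k) $$ (i, j)
    = complex_of_real ((stab_mat n A ^\<^sub>m k) $$ (i, j))"
  using assms stab_mat_carrier[of n A]
    by (simp add: of_real_hom.mat_hom_pow[OF stab_mat_carrier, symmetric])

lemma summable_word_mat_length_sums_if_stable: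
  fixes A :: "'a::finite \<Rightarrow> real mat"
  assumes A: "\<And>s. A s \<in> carrier_mat n n" and stable: "stable_rep n A"
  shows "summable (\<lambda>k. \<Sum>w | length w = k. sq_frobenius (word_mat n A w))"
proof -
  let ?M = "stab_mat n A"
  have Mc: "map_mat complex_of_real ?M \<in> carrier_mat (n * n) (n * n)"
    using stab_mat_carrier by simp
  have "\<And>\<mu>. eigenvalue (map_mat complex_of_real ?M) \<mu> \<Longrightarrow> cmod \<mu> < 1"
    using stable unfolding stable_rep_def by blast
  from pow_entries_geometric_bound[OF Mc this] obtain K \<rho> where \<rho>: "0 \<le> \<rho>" "\<rho> < 1"
    and bound: "\<forall>k i j. i < n * n \<longrightarrow> j < n * n \<longrightarrow>
      cmod ((map_mat complex_of_real ?M ^\<^sub>m k) $$ (i, j)) \<le> K * \<rho> ^ k"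
    by blast
  have "(?M ^\<^sub>m k) $$ (j * n + j, i * n + i) \<le> K * \<rho> ^ k" if "i < n" "j < n" for i j k
    using bound[rule_format, of "j * n + j" "i * n + i" k] that
      pair_index_less[of j n j] pair_index_less[of i n i]
    by (simp add: of_real_stab_mat_pow_entry)
  then have le: "(\<Sum>w | length w = k. sq_frobenius (word_mat n A w)) \<le> (\<Sum>i<n. \<Sum>j<n. K * \<rho> ^ k)" for k
    unfolding sum_sq_frobenius_word_mat[of A n, OF A] by (intro sum_mono) simp
  show ?thesis
  proof (rule summable_comparison_test')
    show "summable (\<lambda>k. (n * n) * K * \<rho> ^ k)"
      using \<rho> by (intro summable_mult summable_geometric) simp
    have "0 \<le> (\<Sum>w | length w = k. sq_frobenius (word_mat n A w))" for k
      by (intro sum_nonneg sq_frobenius_nonneg)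
    then show "norm (\<Sum>w | length w = k. sq_frobenius (word_mat n A w)) \<le> (n * n) * K * \<rho> ^ k" for k
      using le[of k] by simp
  qed
qed

lemma stable_if_word_mat_length_sums_tendsto_0:
  fixes A :: "'a::finite \<Rightarrow> real mat"
  assumes A: "\<And>s. A s \<in> carrier_mat n n"
    and lim: "(\<lambda>k. \<Sum>w | length w = k. sq_frobenius (word_mat n A w)) \<longlonglongrightarrow> 0"
  shows "stable_rep n A"
proof -
  let ?M = "stab_mat n A"
  have Mc: "map_mat complex_of_real ?M \<in> carrier_mat (n * n) (n * n)"
    using stab_mat_carrier by simp
  have "(\<lambda>k. (map_mat complex_of_real ?M ^\<^sub>m k) $$ (i, j)) \<longlonglongrightarrow> 0"
    if ij: "i < n * n" "j < n * n" for i j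
  proof -
    have "(\<lambda>k. (?M ^\<^sub>m k) $$ (i, j)) \<longlonglongrightarrow> 0"
    proof (rule Lim_null_comparison[OF _ lim])
      show "\<forall>\<^sub>F k in sequentially.
          norm ((?M ^\<^sub>m k) $$ (i, j)) \<le> (\<Sum>w | length w = k. sq_frobenius (word_mat n A w))"
        using abs_stab_mat_pow_entry_le[of A n, OF A ij] by (simp add: always_eventually)
    qed
    then have "(\<lambda>k. complex_of_real ((?M ^\<^sub>m k) $$ (i, j))) \<longlonglongrightarrow> complex_of_real 0"
      by (rule tendsto_of_real)
    then show ?thesis using ij by (simp add: of_real_stab_mat_pow_entry)
  qed
  then show "stable_rep n A"
    unfolding stable_rep_def
    by (blast intro: eigenvalue_lt_1_if_pow_entries_tendsto_0[OF Mc])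
qed

lemma stable_rep_iff_summable_word_mat:
  fixes A :: "'a::finite \<Rightarrow> real mat"
  assumes A: "\<And>s. A s \<in> carrier_mat n n"
  shows "stable_rep n A \<longleftrightarrow> (\<lambda>w. sq_frobenius (word_mat n A w)) summable_on UNIV"
proof -
  have equiv: "(\<lambda>w. sq_frobenius (word_mat n A w)) summable_on UNIV
      \<longleftrightarrow> summable (\<lambda>k. \<Sum>w | length w = k. sq_frobenius (word_mat n A w))"
    by (rule nonneg_summable_on_words_iff) (rule sq_frobenius_nonneg)
  show ?thesis
  proof
    assume "stable_rep n A"
    with summable_word_mat_length_sums_if_stable[of A n, OF A] equiv
    show "(\<lambda>w. sq_frobenius (word_mat n A w)) summable_on UNIV" by simp
  next
    assume "(\<lambda>w. sq_frobenius (word_mat n A w)) summable_on UNIV"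
    with equiv have "summable (\<lambda>k. \<Sum>w | length w = k. sq_frobenius (word_mat n A w))" by simp
    then show "stable_rep n A"
      by (intro stable_if_word_mat_length_sums_tendsto_0[of A n, OF A] summable_LIMSEQ_zero)
  qed
qed

lemma stable_representation_square_summable:
  fixes A :: "'a::finite \<Rightarrow> real mat"
  assumes rep: "is_representation J p S n A B C" and stable: "stable_rep n A"
  shows "square_summable J S"
  unfolding square_summable_def
proof
  fix j assume "j \<in> J"
  with rep have A: "\<And>s. A s \<in> carrier_mat n n" and B: "B j \<in> carrier_vec n"
    and C: "C \<in> carrier_mat p n" and S: "\<And>w. S j w = C *\<^sub>v (word_mat n A w *\<^sub>v B j)"
    unfolding is_representation_def by auto
  have W: "word_mat n A w \<in> carrier_mat n n" for w by (rule word_mat_carrier[of A n, OF A])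
  have bound: "sq_norm2 (S j w) \<le> sq_frobenius C * sq_norm2 (B j) * sq_frobenius (word_mat n A w)"
    for w
  proof -
    have "sq_norm2 (S j w) \<le> sq_frobenius C * sq_norm2 (word_mat n A w *\<^sub>v B j)"
      unfolding S using C W[of w] B by (intro sq_norm2_mult_mat_vec_le) auto
    also have "\<dots> \<le> sq_frobenius C * (sq_frobenius (word_mat n A w) * sq_norm2 (B j))"
      by (rule mult_left_mono[OF sq_norm2_mult_mat_vec_le[OF W B] sq_frobenius_nonneg])
    finally show ?thesis by (simp add: mult_ac)
  qed
  have "(\<lambda>w. sq_frobenius (word_mat n A w)) summable_on UNIV"
    using stable stable_rep_iff_summable_word_mat[of A n, OF A] by simp
  then have "(\<lambda>w. sq_frobenius C * sq_norm2 (B j) * sq_frobenius (word_mat n A w)) summable_on UNIV"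
    by (rule summable_on_cmult_right)
  then show "(\<lambda>w. sq_norm2 (S j w)) summable_on UNIV"
  proof (rule summable_on_comparison_test)
    show "0 \<le> sq_norm2 (S j w)" for w unfolding sq_norm2_def by (intro sum_nonneg) simp
  qed (rule bound)
qed

section \<open>Minimal representations are reachable and observable\<close>

context vec_space
begin

lemma exists_short_spanning_list:
  assumes X: "X \<subseteq> carrier_vec n" and not_spanning: "\<not> carrier_vec n \<subseteq> span X"
  shows "\<exists>bs. set bs \<subseteq> X \<and> length bs < n \<and> X \<subseteq> span (set bs)"
proof -
  let ?indep = "\<lambda>S. S \<subseteq> X \<and> lin_indpt S"
  have bounded: "finite S \<and> card S \<le> n" if "?indep S" for S
    using that li_le_dim[OF fin_dim] X dim_is_n by auto
  have "?indep {}" unfolding lin_dep_def by auto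
  from maximal_exists[of ?indep, OF bounded this] obtain \<beta> where "finite \<beta>" "maximal \<beta> ?indep"
    by blast
  then have \<beta>X: "\<beta> \<subseteq> X" and li: "lin_indpt \<beta>" unfolding maximal_def by auto
  have \<beta>C: "\<beta> \<subseteq> carrier_vec n" using \<beta>X X by auto
  have X_span: "X \<subseteq> span \<beta>"
  proof
    fix x assume x: "x \<in> X"
    show "x \<in> span \<beta>"
    proof (rule ccontr)
      assume x_notin: "x \<notin> span \<beta>"
      then have "x \<notin> \<beta>" using in_own_span[OF \<beta>C] by auto
      moreover have "lin_indpt (\<beta> \<union> {x})"
        using lin_dep_iff_in_span[OF \<beta>C li _ \<open>x \<notin> \<beta>\<close>] x X x_notin by auto
      then have "\<beta> \<union> {x} = \<beta>" using \<open>maximal \<beta> ?indep\<close> x \<beta>X unfolding maximal_def by blast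
      ultimately show False by auto
    qed
  qed
  have "card \<beta> < n"
  proof (rule ccontr)
    assume "\<not> card \<beta> < n"
    then have "span \<beta> = carrier_vec n"
      using dim_li_is_basis[OF fin_dim \<open>finite \<beta>\<close> \<beta>C li] dim_is_n unfolding basis_def by auto
    with span_is_monotone[OF \<beta>X] not_spanning show False by auto
  qed
  moreover obtain bs where "set bs = \<beta>" "distinct bs" using finite_distinct_list[OF \<open>finite \<beta>\<close>]
    by blast
  ultimately show ?thesis using \<beta>X X_span distinct_card by fastforce
qed

lemma invariant_set_compression:
  fixes T :: "'b \<Rightarrow> 'a mat"
  assumes T: "\<And>s. T s \<in> carrier_mat n n" and X: "X \<subseteq> carrier_vec n"
    and invariant: "\<And>x s. x \<in> X \<Longrightarrow> T s *\<^sub>v x \<in> X"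
    and not_spanning: "\<not> carrier_vec n \<subseteq> span X"
  shows "\<exists>m P T'. m < n \<and> P \<in> carrier_mat n m \<and> (\<forall>s. T' s \<in> carrier_mat m m \<and> T s * P = P * T' s)
      \<and> (\<forall>x\<in>X. \<exists>c\<in>carrier_vec m. x = P *\<^sub>v c)"
proof -
  obtain bs where bX: "set bs \<subseteq> X" and len: "length bs < n" and X_span: "X \<subseteq> span (set bs)"
    using exists_short_spanning_list[OF X not_spanning] by blast
  define m where "m = length bs"
  define P where "P = mat_of_cols n bs"
  have bC: "set bs \<subseteq> carrier_vec n" using bX X by auto
  have P: "P \<in> carrier_mat n m" unfolding P_def m_def by auto
  have coords: "\<exists>c\<in>carrier_vec m. x = P *\<^sub>v c" if "x \<in> X" for x
  proof -
    have "x \<in> span_list bs" using X_span that span_list_as_span[OF bC] by auto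
    then obtain c where "x = lincomb_list c bs" unfolding span_list_def by auto
    also have "\<dots> = P *\<^sub>v vec m c"
      unfolding P_def m_def by (rule lincomb_list_as_mat_mult) (use bC in auto)
    finally show ?thesis by (intro bexI[of _ "vec m c"]) auto
  qed
  define coord where "coord x = (SOME c. c \<in> carrier_vec m \<and> x = P *\<^sub>v c)" for x
  have coord: "coord x \<in> carrier_vec m \<and> x = P *\<^sub>v coord x" if "x \<in> X" for x
    unfolding coord_def by (rule someI_ex) (use coords[OF that] in blast)
  define T' where "T' s = mat m m (\<lambda>(i, k). coord (T s *\<^sub>v bs ! k) $ i)" for s
  have T': "T' s \<in> carrier_mat m m" for s unfolding T'_def by auto
  have TbX: "T s *\<^sub>v bs ! k \<in> X" if "k < m" for s k
    using invariant bX that unfolding m_def by (meson nth_mem subsetD)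
  have col_T': "col (T' s) k = coord (T s *\<^sub>v bs ! k)" if "k < m" for s k
    using coord[OF TbX[of k s, OF that]] that by (intro eq_vecI) (auto simp: T'_def)
  have "T s * P = P * T' s" for s
  proof (rule eq_matI)
    fix i k assume "i < dim_row (P * T' s)" "k < dim_col (P * T' s)"
    then have i: "i < n" and k: "k < m" using P T'[of s] by auto
    have col_P: "col P k = bs ! k" unfolding P_def using k m_def bC by (subst col_mat_of_cols) auto
    have "(T s * P) $$ (i, k) = (T s *\<^sub>v bs ! k) $ i" using i k T[of s] P col_P by auto
    also have "\<dots> = (P *\<^sub>v col (T' s) k) $ i" using coord[OF TbX[of k s, OF k]] col_T'[OF k] by metis
    also have "\<dots> = (P * T' s) $$ (i, k)" using i k P T'[of s] by auto
    finally show "(T s * P) $$ (i, k) = (P * T' s) $$ (i, k)" .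
  qed (use T[of s] P T'[of s] in auto)
  with len m_def P T' coords show ?thesis by blast
qed

end

lemma word_mat_intertwine:
  assumes A: "\<And>s. A s \<in> carrier_mat n n" and A': "\<And>s. A' s \<in> carrier_mat m m"
    and P: "P \<in> carrier_mat n m" and intertwine: "\<And>s. A s * P = P * A' s"
  shows "word_mat n A w * P = P * word_mat m A' w"
proof (induction w)
  case Nil
  show ?case using P by simp
next
  case (Cons s w)
  have W: "word_mat n A w \<in> carrier_mat n n" "word_mat m A' w \<in> carrier_mat m m"
    using word_mat_carrier[of A n, OF A] word_mat_carrier[of A' m, OF A'] by auto
  have "word_mat n A (s # w) * P = word_mat n A w * (A s * P)"
    using assoc_mult_mat[OF W(1) A[of s] P] by simp
  also have "\<dots> = (word_mat n A w * P) * A' s"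
    unfolding intertwine using assoc_mult_mat[OF W(1) P A'[of s]] by simp
  also have "\<dots> = P * word_mat m A' (s # w)"
    unfolding Cons using assoc_mult_mat[OF P W(2) A'[of s]] by simp
  finally show ?case .
qed

lemma word_mat_intertwine_left:
  assumes A: "\<And>s. A s \<in> carrier_mat n n" and A': "\<And>s. A' s \<in> carrier_mat m m"
    and Q: "Q \<in> carrier_mat m n" and intertwine: "\<And>s. Q * A s = A' s * Q"
  shows "Q * word_mat n A w = word_mat m A' w * Q"
proof (induction w)
  case Nil
  show ?case using Q by simp
next
  case (Cons s w)
  have W: "word_mat n A w \<in> carrier_mat n n" "word_mat m A' w \<in> carrier_mat m m"
    using word_mat_carrier[of A n, OF A] word_mat_carrier[of A' m, OF A'] by auto
  have "Q * word_mat n A (s # w) = (Q * word_mat n A w) * A s"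
    using assoc_mult_mat[OF Q W(1) A[of s]] by simp
  also have "\<dots> = word_mat m A' w * (A' s * Q)"
    unfolding Cons intertwine[symmetric] using assoc_mult_mat[OF W(2) Q A[of s]] by simp
  also have "\<dots> = word_mat m A' (s # w) * Q"
    using assoc_mult_mat[OF W(2) A'[of s] Q] by simp
  finally show ?case .
qed

lemma is_representation_compress:
  assumes rep: "is_representation J p S n A B C"
    and A': "\<And>s. A' s \<in> carrier_mat m m" and P: "P \<in> carrier_mat n m"
    and intertwine: "\<And>s. A s * P = P * A' s"
    and B': "\<And>j. j \<in> J \<Longrightarrow> B' j \<in> carrier_vec m \<and> B j = P *\<^sub>v B' j"
  shows "is_representation J p S m A' B' (C * P)"
proof -
  from rep have A: "\<And>s. A s \<in> carrier_mat n n" and C: "C \<in> carrier_mat p n"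
    and S: "\<And>j w. j \<in> J \<Longrightarrow> S j w = C *\<^sub>v (word_mat n A w *\<^sub>v B j)"
    unfolding is_representation_def by auto
  have "S j w = (C * P) *\<^sub>v (word_mat m A' w *\<^sub>v B' j)" if j: "j \<in> J" for j w
  proof -
    have W: "word_mat n A w \<in> carrier_mat n n" "word_mat m A' w \<in> carrier_mat m m"
      using word_mat_carrier[of A n, OF A] word_mat_carrier[of A' m, OF A'] by auto
    have "S j w = C *\<^sub>v ((word_mat n A w * P) *\<^sub>v B' j)"
      using S[OF j] B'[OF j] W P by (simp add: assoc_mult_mat_vec)
    also have "\<dots> = (C * P) *\<^sub>v (word_mat m A' w *\<^sub>v B' j)"
      unfolding word_mat_intertwine[of A n A' m P, OF A A' P intertwine]
      using W P B'[OF j] C by (simp add: assoc_mult_mat_vec)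
    finally show ?thesis .
  qed
  then show ?thesis unfolding is_representation_def using A' B' C P by auto
qed

lemma is_representation_compress_left:
  assumes rep: "is_representation J p S n A B C"
    and A': "\<And>s. A' s \<in> carrier_mat m m" and Q: "Q \<in> carrier_mat m n"
    and intertwine: "\<And>s. Q * A s = A' s * Q"
    and C': "C' \<in> carrier_mat p m" and C_eq: "C = C' * Q"
  shows "is_representation J p S m A' (\<lambda>j. Q *\<^sub>v B j) C'"
proof -
  from rep have A: "\<And>s. A s \<in> carrier_mat n n" and B: "\<And>j. j \<in> J \<Longrightarrow> B j \<in> carrier_vec n"
    and S: "\<And>j w. j \<in> J \<Longrightarrow> S j w = C *\<^sub>v (word_mat n A w *\<^sub>v B j)"
    unfolding is_representation_def by auto
  have "S j w = C' *\<^sub>v (word_mat m A' w *\<^sub>v (Q *\<^sub>v B j))" if j: "j \<in> J" for j w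
  proof -
    have W: "word_mat n A w \<in> carrier_mat n n" "word_mat m A' w \<in> carrier_mat m m"
      using word_mat_carrier[of A n, OF A] word_mat_carrier[of A' m, OF A'] by auto
    have "S j w = C' *\<^sub>v ((Q * word_mat n A w) *\<^sub>v B j)"
      using S[OF j] B[OF j] W Q C' C_eq by (simp add: assoc_mult_mat_vec)
    also have "\<dots> = C' *\<^sub>v (word_mat m A' w *\<^sub>v (Q *\<^sub>v B j))"
      unfolding word_mat_intertwine_left[of A n A' m Q, OF A A' Q intertwine]
      using W Q B[OF j] by (simp add: assoc_mult_mat_vec)
    finally show ?thesis .
  qed
  then show ?thesis unfolding is_representation_def using A' B Q C' by auto
qed

abbreviation real_span :: "nat \<Rightarrow> real vec set \<Rightarrow> real vec set" where
  "real_span n \<equiv> module.span class_ring (module_vec TYPE(real) n)"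

definition reachable_vecs :: "nat \<Rightarrow> ('a \<Rightarrow> real mat) \<Rightarrow> 'j set \<Rightarrow> ('j \<Rightarrow> real vec) \<Rightarrow> real vec set"
  where "reachable_vecs n A J B = {word_mat n A u *\<^sub>v B j | u j. j \<in> J}"

definition observable_rows :: "nat \<Rightarrow> nat \<Rightarrow> ('a \<Rightarrow> real mat) \<Rightarrow> real mat \<Rightarrow> real vec set"
  where "observable_rows p n A C = {row (C * word_mat n A v) i | v i. i < p}"

lemma reachable_vecs_carrier:
  assumes A: "\<And>s. A s \<in> carrier_mat n n" and B: "\<And>j. j \<in> J \<Longrightarrow> B j \<in> carrier_vec n"
  shows "reachable_vecs n A J B \<subseteq> carrier_vec n"
proof
  fix x assume "x \<in> reachable_vecs n A J B"
  then obtain u j where "j \<in> J" "x = word_mat n A u *\<^sub>v B j" unfolding reachable_vecs_def by blast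
  with word_mat_carrier[of A n u, OF A] B show "x \<in> carrier_vec n"
    by (simp add: mult_mat_vec_carrier)
qed

lemma observable_rows_carrier:
  assumes A: "\<And>s. A s \<in> carrier_mat n n" and C: "C \<in> carrier_mat p n"
  shows "observable_rows p n A C \<subseteq> carrier_vec n"
proof
  fix x assume "x \<in> observable_rows p n A C"
  then obtain v i where "x = row (C * word_mat n A v) i" unfolding observable_rows_def by blast
  with word_mat_carrier[of A n v, OF A] C show "x \<in> carrier_vec n" by (simp add: carrier_vecI)
qed

lemma minimal_representation_reachable:
  assumes min: "minimal_representation J p S n A B C"
  shows "carrier_vec n \<subseteq> real_span n (reachable_vecs n A J B)"
proof (rule ccontr)
  interpret V: vec_space "TYPE(real)" n .
  let ?X = "reachable_vecs n A J B"
  assume not_spanning: "\<not> carrier_vec n \<subseteq> V.span ?X"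
  from min have rep: "is_representation J p S n A B C"
    and smallest: "\<And>n' A' B' C'. is_representation J p S n' A' B' C' \<Longrightarrow> n \<le> n'"
    unfolding minimal_representation_def by auto
  from rep have A: "\<And>s. A s \<in> carrier_mat n n" and B: "\<And>j. j \<in> J \<Longrightarrow> B j \<in> carrier_vec n"
    unfolding is_representation_def by auto
  have W: "word_mat n A u \<in> carrier_mat n n" for u by (rule word_mat_carrier[of A n, OF A])
  have X: "?X \<subseteq> carrier_vec n" using A B by (rule reachable_vecs_carrier)
  have invariant: "A s *\<^sub>v x \<in> ?X" if "x \<in> ?X" for x s
  proof -
    from that obtain u j where j: "j \<in> J" and x: "x = word_mat n A u *\<^sub>v B j"
      unfolding reachable_vecs_def by auto
    have "A s *\<^sub>v x = word_mat n A (u @ [s]) *\<^sub>v B j"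
      unfolding x word_mat_snoc[of A n, OF A] using A[of s] W[of u] B[OF j]
        by (simp add: assoc_mult_mat_vec)
    with j show ?thesis unfolding reachable_vecs_def by blast
  qed
  from V.invariant_set_compression[of A ?X, OF A X invariant not_spanning] obtain m P A'
    where "m < n" and P: "P \<in> carrier_mat n m"
      and A': "\<forall>s. A' s \<in> carrier_mat m m \<and> A s * P = P * A' s"
      and coords: "\<forall>x\<in>?X. \<exists>c\<in>carrier_vec m. x = P *\<^sub>v c"
    by blast
  have "B j \<in> ?X" if "j \<in> J" for j
    unfolding reachable_vecs_def using that B[OF that]
      by (intro CollectI exI[of _ "[]"] exI[of _ j]) simp
  then have "\<forall>j\<in>J. \<exists>c. c \<in> carrier_vec m \<and> B j = P *\<^sub>v c" using coords by blast
  then obtain B' where "\<And>j. j \<in> J \<Longrightarrow> B' j \<in> carrier_vec m \<and> B j = P *\<^sub>v B' j"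
    by metis
  with A' have "is_representation J p S m A' B' (C * P)"
    by (intro is_representation_compress[OF rep _ P]) auto
  then have "n \<le> m" by (rule smallest)
  with \<open>m < n\<close> show False by simp
qed

lemma row_mult_eq_transpose_mult_vec:
  assumes X: "(X :: 'a :: comm_ring_1 mat) \<in> carrier_mat a b" and Y: "Y \<in> carrier_mat b c"
    and i: "i < a"
  shows "row (X * Y) i = transpose_mat Y *\<^sub>v row X i"
proof (rule eq_vecI)
  fix k assume "k < dim_vec (transpose_mat Y *\<^sub>v row X i)"
  then have k: "k < c" using Y by auto
  have "row X i \<bullet> col Y k = col Y k \<bullet> row X i"
    using X Y k by (intro comm_scalar_prod[of _ b]) auto
  with X Y i k show "row (X * Y) i $ k = (transpose_mat Y *\<^sub>v row X i) $ k" by auto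
qed (use X Y in auto)

lemma transpose_intertwine:
  fixes A :: "'a :: comm_semiring_0 mat"
  assumes "A \<in> carrier_mat n n" "P \<in> carrier_mat n m" "T \<in> carrier_mat m m"
    and "transpose_mat A * P = P * T"
  shows "transpose_mat P * A = transpose_mat T * transpose_mat P"
proof -
  have "transpose_mat (transpose_mat A * P) = transpose_mat P * A"
    using transpose_mult[of "transpose_mat A" n n P m] assms(1,2) by simp
  moreover have "transpose_mat (P * T) = transpose_mat T * transpose_mat P"
    using transpose_mult[OF assms(2,3)] .
  ultimately show ?thesis using assms(4) by metis
qed

lemma factor_mult_transpose_if_rows_in_range:
  fixes C :: "'a :: comm_semiring_0 mat"
  assumes C: "C \<in> carrier_mat p n" and P: "P \<in> carrier_mat n m"
    and rows: "\<And>i. i < p \<Longrightarrow> \<exists>c\<in>carrier_vec m. row C i = P *\<^sub>v c"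
  shows "\<exists>C'. C' \<in> carrier_mat p m \<and> C = C' * transpose_mat P"
proof -
  from rows obtain cs where cs: "\<And>i. i < p \<Longrightarrow> cs i \<in> carrier_vec m \<and> row C i = P *\<^sub>v cs i"
    by metis
  define C' where "C' = mat p m (\<lambda>(i, k). cs i $ k)"
  have C': "C' \<in> carrier_mat p m" unfolding C'_def by auto
  have "C = C' * transpose_mat P"
  proof (rule eq_matI)
    fix i l assume "i < dim_row (C' * transpose_mat P)" "l < dim_col (C' * transpose_mat P)"
    then have i: "i < p" and l: "l < n" using C' P by auto
    have "row C' i = cs i" using cs[OF i] i unfolding C'_def by (intro eq_vecI) auto
    moreover have "C $$ (i, l) = row C i $ l" using C i l by simp
    moreover have "\<dots> = row P l \<bullet> cs i" using cs[OF i] P l by simp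
    ultimately show "C $$ (i, l) = (C' * transpose_mat P) $$ (i, l)"
      using P l i C' cs[OF i] by (auto simp: comm_scalar_prod[of _ m])
  qed (use C C' P in auto)
  with C' show ?thesis by blast
qed

lemma minimal_representation_observable:
  assumes min: "minimal_representation J p S n A B C"
  shows "carrier_vec n \<subseteq> real_span n (observable_rows p n A C)"
proof (rule ccontr)
  interpret V: vec_space "TYPE(real)" n .
  let ?X = "observable_rows p n A C"
  assume not_spanning: "\<not> carrier_vec n \<subseteq> V.span ?X"
  from min have rep: "is_representation J p S n A B C"
    and smallest: "\<And>n' A' B' C'. is_representation J p S n' A' B' C' \<Longrightarrow> n \<le> n'"
    unfolding minimal_representation_def by auto
  from rep have A: "\<And>s. A s \<in> carrier_mat n n" and C: "C \<in> carrier_mat p n"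
    unfolding is_representation_def by auto
  have W: "word_mat n A u \<in> carrier_mat n n" for u by (rule word_mat_carrier[of A n, OF A])
  have AT: "transpose_mat (A s) \<in> carrier_mat n n" for s using A[of s] by simp
  have X: "?X \<subseteq> carrier_vec n" using A C by (rule observable_rows_carrier)
  have invariant: "transpose_mat (A s) *\<^sub>v x \<in> ?X" if "x \<in> ?X" for x s
  proof -
    from that obtain v i where i: "i < p" and x: "x = row (C * word_mat n A v) i"
      unfolding observable_rows_def by auto
    have "transpose_mat (A s) *\<^sub>v x = row (C * word_mat n A v * A s) i"
      unfolding x using A[of s] W[of v] C i by (subst row_mult_eq_transpose_mult_vec[of _ p n]) auto
    also have "\<dots> = row (C * word_mat n A (s # v)) i"
      using A[of s] W[of v] C by (simp add: assoc_mult_mat[of _ p n _ n _ n])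
    finally show ?thesis using i unfolding observable_rows_def by blast
  qed
  from V.invariant_set_compression[of "\<lambda>s. transpose_mat (A s)" ?X, OF AT X invariant not_spanning]
  obtain m P T where "m < n" and P: "P \<in> carrier_mat n m"
    and T_props: "\<forall>s. T s \<in> carrier_mat m m \<and> transpose_mat (A s) * P = P * T s"
    and coords: "\<forall>x\<in>?X. \<exists>c\<in>carrier_vec m. x = P *\<^sub>v c"
    by blast
  have T: "\<And>s. T s \<in> carrier_mat m m" "\<And>s. transpose_mat (A s) * P = P * T s"
    using T_props by auto
  define Q where "Q = transpose_mat P"
  define A' where "A' s = transpose_mat (T s)" for s
  have Q: "Q \<in> carrier_mat m n" and A': "\<And>s. A' s \<in> carrier_mat m m"
    unfolding Q_def A'_def using P T(1) by auto
  have intertwine: "Q * A s = A' s * Q" for s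
    unfolding Q_def A'_def using transpose_intertwine[OF A[of s] P T(1) T(2)] .
  have "row C i \<in> ?X" if "i < p" for i
    unfolding observable_rows_def using that C by (intro CollectI exI[of _ "[]"] exI[of _ i]) simp
  with coords have "\<exists>c\<in>carrier_vec m. row C i = P *\<^sub>v c" if "i < p" for i
    using that by blast
  from factor_mult_transpose_if_rows_in_range[OF C P this] obtain C'
    where C': "C' \<in> carrier_mat p m" and C_eq: "C = C' * Q" unfolding Q_def by blast
  from is_representation_compress_left[OF rep A' Q intertwine C' C_eq] have "n \<le> m"
    by (rule smallest)
  with \<open>m < n\<close> show False by simp
qed

section \<open>Square summable minimal representations are stable\<close>

lemma sq_summable_in_real_span:
  assumes X: "X \<subseteq> carrier_vec n" and x: "x \<in> real_span n X"
    and f: "\<And>w. f w \<in> carrier_vec n" and summable: "\<And>u. u \<in> X \<Longrightarrow> sq_summable (\<lambda>w. u \<bullet> f w)"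
  shows "sq_summable (\<lambda>w. x \<bullet> f w)"
proof -
  interpret V: vec_space "TYPE(real)" n .
  obtain a F where x_eq: "x = V.lincomb a F" and F: "finite F" "F \<subseteq> X"
    using V.in_spanE[OF x] by blast
  have FC: "F \<subseteq> carrier_vec n" using F X by auto
  have "x \<bullet> f w = (\<Sum>u\<in>F. a u * (u \<bullet> f w))" for w
  proof -
    have "x \<bullet> f w = (\<Sum>i<n. (\<Sum>u\<in>F. a u * u $ i) * f w $ i)"
      using f[of w] V.lincomb_index[OF _ FC] unfolding x_eq scalar_prod_def
      by (simp add: atLeast0LessThan)
    also have "\<dots> = (\<Sum>u\<in>F. a u * (\<Sum>i<n. u $ i * f w $ i))"
      by (simp add: sum_distrib_left sum_distrib_right mult_ac sum.swap[of _ F])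
    also have "\<dots> = (\<Sum>u\<in>F. a u * (u \<bullet> f w))"
      using FC f[of w] by (intro sum.cong) (auto simp: scalar_prod_def atLeast0LessThan)
    finally show ?thesis .
  qed
  moreover have "sq_summable (\<lambda>w. \<Sum>u\<in>F. a u * (u \<bullet> f w))"
    using summable F(2) by (intro sq_summable_sum[OF F(1)]) auto
  ultimately show ?thesis by simp
qed

lemma scalar_prod_mult_mat_vec_swap:
  fixes M :: "'a :: comm_semiring_0 mat"
  assumes x: "x \<in> carrier_vec nr" and M: "M \<in> carrier_mat nr nc" and y: "y \<in> carrier_vec nc"
  shows "x \<bullet> (M *\<^sub>v y) = y \<bullet> (transpose_mat M *\<^sub>v x)"
proof -
  have row_sum: "x $ i * (\<Sum>k<nc. M $$ (i, k) * y $ k) = (\<Sum>k<nc. x $ i * M $$ (i, k) * y $ k)" for i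
    by (simp add: sum_distrib_left algebra_simps)
  have col_sum: "(\<Sum>i<nr. x $ i * M $$ (i, k) * y $ k) = y $ k * (\<Sum>i<nr. M $$ (i, k) * x $ i)" for k
    by (simp add: sum_distrib_left algebra_simps)
  have "x \<bullet> (M *\<^sub>v y) = (\<Sum>i<nr. \<Sum>k<nc. x $ i * M $$ (i, k) * y $ k)"
    using x M y by (simp add: scalar_prod_def atLeast0LessThan row_sum)
  also have "\<dots> = (\<Sum>k<nc. \<Sum>i<nr. x $ i * M $$ (i, k) * y $ k)" by (rule sum.swap)
  also have "\<dots> = y \<bullet> (transpose_mat M *\<^sub>v x)"
    using x M y by (simp add: scalar_prod_def atLeast0LessThan col_sum)
  finally show ?thesis .
qed

lemma sq_summable_entries_if_spanning:
  assumes X: "X \<subseteq> carrier_vec n" "carrier_vec n \<subseteq> real_span n X"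
    and Y: "Y \<subseteq> carrier_vec n" "carrier_vec n \<subseteq> real_span n Y"
    and W: "\<And>w. W w \<in> carrier_mat n n"
    and summable: "\<And>x y. x \<in> X \<Longrightarrow> y \<in> Y \<Longrightarrow> sq_summable (\<lambda>w. x \<bullet> (W w *\<^sub>v y))"
    and ik: "i < n" "k < n"
  shows "sq_summable (\<lambda>w. W w $$ (i, k))"
proof -
  have swap: "x \<bullet> (W w *\<^sub>v y) = y \<bullet> (transpose_mat (W w) *\<^sub>v x)"
    if "x \<in> carrier_vec n" "y \<in> carrier_vec n" for x y w
    by (rule scalar_prod_mult_mat_vec_swap[OF that(1) W[of w] that(2)])
  have "sq_summable (\<lambda>w. x \<bullet> (W w *\<^sub>v y))" if x: "x \<in> X" and y: "y \<in> carrier_vec n" for x y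
  proof -
    have xC: "x \<in> carrier_vec n" using x X(1) by auto
    have "sq_summable (\<lambda>w. y \<bullet> (transpose_mat (W w) *\<^sub>v x))"
    proof (rule sq_summable_in_real_span[OF Y(1)])
      show "y \<in> real_span n Y" using y Y(2) by auto
      show "transpose_mat (W w) *\<^sub>v x \<in> carrier_vec n" for w using W[of w] xC by simp
      show "sq_summable (\<lambda>w. v \<bullet> (transpose_mat (W w) *\<^sub>v x))" if v: "v \<in> Y" for v
      proof -
        have "v \<in> carrier_vec n" using v Y(1) by auto
        with summable[OF x v] show ?thesis by (simp add: swap[OF xC])
      qed
    qed
    then show ?thesis using swap[OF xC y] by simp
  qed
  note row_summable = this
  have "sq_summable (\<lambda>w. unit_vec n i \<bullet> (W w *\<^sub>v unit_vec n k))"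
  proof (rule sq_summable_in_real_span[OF X(1)])
    show "unit_vec n i \<in> real_span n X" using X(2) by auto
    show "W w *\<^sub>v unit_vec n k \<in> carrier_vec n" for w using W[of w] by simp
    show "sq_summable (\<lambda>w. u \<bullet> (W w *\<^sub>v unit_vec n k))" if "u \<in> X" for u
      using that by (rule row_summable) simp
  qed
  moreover have "unit_vec n i \<bullet> (W w *\<^sub>v unit_vec n k) = W w $$ (i, k)" for w
    using ik W[of w] by simp
  ultimately show ?thesis by simp
qed

lemma minimal_word_mat_entries_sq_summable:
  assumes min: "minimal_representation J p S n A B C" and ss: "square_summable J S"
    and ik: "i < n" "k < n"
  shows "sq_summable (\<lambda>w. word_mat n A w $$ (i, k))"
proof -
  from min have "is_representation J p S n A B C" unfolding minimal_representation_def by simp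
  then have A: "\<And>s. A s \<in> carrier_mat n n" and B: "\<And>j. j \<in> J \<Longrightarrow> B j \<in> carrier_vec n"
    and C: "C \<in> carrier_mat p n" and S: "\<And>j w. j \<in> J \<Longrightarrow> S j w = C *\<^sub>v (word_mat n A w *\<^sub>v B j)"
    unfolding is_representation_def by auto
  have W: "word_mat n A w \<in> carrier_mat n n" for w by (rule word_mat_carrier[of A n, OF A])
  show ?thesis
  proof (rule sq_summable_entries_if_spanning[OF _ minimal_representation_observable[OF min]
        _ minimal_representation_reachable[OF min] W _ ik])
    show "observable_rows p n A C \<subseteq> carrier_vec n" using A C by (rule observable_rows_carrier)
    show "reachable_vecs n A J B \<subseteq> carrier_vec n" using A B by (rule reachable_vecs_carrier)
    fix x y assume "x \<in> observable_rows p n A C" "y \<in> reachable_vecs n A J B"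
    then obtain v l u j where l: "l < p" and j: "j \<in> J"
      and x: "x = row (C * word_mat n A v) l" and y: "y = word_mat n A u *\<^sub>v B j"
      unfolding observable_rows_def reachable_vecs_def by blast
    have "x \<bullet> (word_mat n A w *\<^sub>v y) = S j (u @ w @ v) $ l" for w
    proof -
      have "x \<bullet> (word_mat n A w *\<^sub>v y) = ((C * word_mat n A v) *\<^sub>v (word_mat n A w *\<^sub>v y)) $ l"
        unfolding x using l C W[of v] by simp
      also have "\<dots> = S j (u @ w @ v) $ l"
        unfolding S[OF j] y word_mat_append[of A n, OF A]
        using C W[of u] W[of v] W[of w] B[OF j] by (simp add: assoc_mult_mat_vec[of _ n n _ n])
      finally show ?thesis .
    qed
    moreover have "sq_summable (\<lambda>w. S j (u @ w @ v) $ l)"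
      unfolding sq_summable_def
    proof (rule summable_on_comparison_test)
      have "(\<lambda>w. sq_norm2 (S j w)) summable_on UNIV" using ss j by (simp add: square_summable_def)
      from summable_on_infix[OF this] show "(\<lambda>w. sq_norm2 (S j (u @ w @ v))) summable_on UNIV" .
      show "(S j (u @ w @ v) $ l)\<^sup>2 \<le> sq_norm2 (S j (u @ w @ v))" for w
        using S[OF j] C l by (intro sq_component_le_sq_norm2) simp
    qed simp
    ultimately show "sq_summable (\<lambda>w. x \<bullet> (word_mat n A w *\<^sub>v y))" by simp
  qed
qed

lemma minimal_representation_stable:
  assumes min: "minimal_representation J p S n A B C" and ss: "square_summable J S"
  shows "stable_rep n A"
proof -
  from min have A: "\<And>s. A s \<in> carrier_mat n n"
    unfolding minimal_representation_def is_representation_def by auto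
  have "(\<lambda>w. (word_mat n A w $$ (i, k))\<^sup>2) summable_on UNIV" if "i < n" "k < n" for i k
    using minimal_word_mat_entries_sq_summable[OF min ss that] unfolding sq_summable_def .
  then have "(\<lambda>w. \<Sum>i<n. \<Sum>k<n. (word_mat n A w $$ (i, k))\<^sup>2) summable_on UNIV"
    by (auto intro!: summable_on_sum)
  moreover have "dim_row (word_mat n A w) = n" "dim_col (word_mat n A w) = n" for w
    using word_mat_carrier[of A n w, OF A] by auto
  ultimately have "(\<lambda>w. sq_frobenius (word_mat n A w)) summable_on UNIV"
    by (simp add: sq_frobenius_def)
  then show ?thesis using stable_rep_iff_summable_word_mat[of A n, OF A] by simp
qed

theorem mainTheorem1:
  fixes J :: "'j set" and p :: nat and S :: "'j \<Rightarrow> ('a::finite) list \<Rightarrow> real vec"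
  assumes "finite J"
  shows "((\<exists>n A B C. is_representation J p S n A B C \<and> stable_rep n A) \<longrightarrow> square_summable J S)
    \<and> (square_summable J S \<longrightarrow>
         (\<forall>n A B C. minimal_representation J p S n A B C \<longrightarrow> stable_rep n A))"
proof (intro conjI impI allI)
  assume "\<exists>n A B C. is_representation J p S n A B C \<and> stable_rep n A"
  then obtain n A B C where "is_representation J p S n A B C" "stable_rep n A" by blast
  then show "square_summable J S" by (rule stable_representation_square_summable)
next
  fix n A B C
  assume "square_summable J S" "minimal_representation J p S n A B C"
  then show "stable_rep n A" by (intro minimal_representation_stable)
qed

end
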